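(* Let $G$ be a finite graph with maximum degree $\Delta$, with edges ordered $e_1,\ldots,e_m$, let $\gamma>1$ be real, $K=\lceil(2+\gamma)(\Delta-1)\rceil$, $t$ a positive integer, and let the Procedure described in the context be run on $G$ with an input vector $F\in\{1,\ldots,\lceil\gamma(\Delta-1)\rceil\}^t$. Then for every step $i$ that is performed, the set $X_i$ of uncolored edges after step $i$ is uniquely determined by the record $(R_j)_{j\le i}$: if two input vectors $F,F'$ both perform step $i$ and produce the same records $R_j=R'_j$ for all $j\le i$, then $X_i=X'_i$.
   Context: Procedure. A partial edge-coloring assigns to some edges a color in $\{1,\ldots,K\}$; initially all edges are uncolored. Fix, for every edge $e$ and every $k\ge 3$, an enumeration (e.g. lexicographic) $C_1,\ldots,C_s$ of the cycles of length $2k$ of $G$ containing $e$. For $i=1,2,\ldots,t$: if no edge is uncolored, stop. Otherwise let $e_j=uv$ be the uncolored edge of smallest index. Let $S'$ be the set of colors appearing on edges $xy\neq uv$ such that (1) $x=u$ or $x=v$, or (2) edges $ux$ and $vy$ exist and have the same color; let $S=\{1,\ldots,K\}\setminus S'$ (one has $|S|\ge\lceil\gamma(\Delta-1)\rceil$). Color $e_j$ with the $F_i$-th smallest element of $S$. If this creates a cycle colored with only two colors (such a cycle has length $2k\ge 6$), choose one such cycle $C$ by a fixed deterministic rule, write it as $e_{i_1},e_{i_2},\ldots,e_{i_{2k}},e_{i_1}$ (consecutive edges) with $e_{i_1}=e_j$ and $i_2<i_{2k}$, uncolor all edges of $C$ except $e_{i_2}$ and $e_{i_3}$, and set $R_i=(k,\ell)$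 where $\ell$ is the index of $C$ in the fixed enumeration of cycles of length $2k$ containing $e_j$. Otherwise $R_i$ is empty. $X_i$ denotes the set of uncolored edges and $\Phi_i$ the partial coloring after step $i$. *)

theory Defs
  imports Complex_Main
begin

text \<open>A finite simple graph is given by its list of edges e_0,...,e_(m-1) (the ordering
  of the paper, shifted to 0-based indices); each edge is a 2-element vertex set.
  Partial edge-colorings map edge indices to an optional colour.\<close>

type_synonym pcol = "nat \<Rightarrow> nat option"

definition simple_graph :: "'v set list \<Rightarrow> bool" where
  "simple_graph E \<longleftrightarrow> distinct E \<and> (\<forall>e\<in>set E. card e = 2)"

definition degree :: "'v set list \<Rightarrow> 'v \<Rightarrow> nat" where
  "degree E v = card {i. i < length E \<and> v \<in> E ! i}"

definition maxdeg :: "'v set list \<Rightarrow> nat" where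
  "maxdeg E = Max ({0} \<union> degree E ` (\<Union>(set E)))"

definition Kcol :: "'v set list \<Rightarrow> real \<Rightarrow> nat" where
  "Kcol E \<gamma> = nat \<lceil>(2 + \<gamma>) * (real (maxdeg E) - 1)\<rceil>"

definition Frange :: "'v set list \<Rightarrow> real \<Rightarrow> nat" where
  "Frange E \<gamma> = nat \<lceil>\<gamma> * (real (maxdeg E) - 1)\<rceil>"

definition uncolored :: "'v set list \<Rightarrow> pcol \<Rightarrow> nat set" where
  "uncolored E col = {i. i < length E \<and> col i = None}"

definition forbidden :: "'v set list \<Rightarrow> pcol \<Rightarrow> nat \<Rightarrow> nat set" where
  "forbidden E col j = {c. \<exists>i<length E. i \<noteq> j \<and> col i = Some c \<and>
     (\<exists>u v x y. E ! j = {u, v} \<and> E ! i = {x, y} \<and>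
        (x = u \<or> x = v \<or>
         (\<exists>a<length E. \<exists>b<length E. E ! a = {u, x} \<and> E ! b = {v, y} \<and>
             col a \<noteq> None \<and> col a = col b)))}"

definition available :: "'v set list \<Rightarrow> real \<Rightarrow> pcol \<Rightarrow> nat \<Rightarrow> nat set" where
  "available E \<gamma> col j = {1..Kcol E \<gamma>} - forbidden E col j"

definition is_cycle :: "'v set list \<Rightarrow> nat set \<Rightarrow> nat \<Rightarrow> bool" where
  "is_cycle E C n \<longleftrightarrow> n \<ge> 3 \<and> (\<exists>vs. length vs = n \<and> distinct vs \<and>
     (\<forall>t<n. {vs ! t, vs ! ((t + 1) mod n)} \<in> set E) \<and>
     C = {i. i < length E \<and> (\<exists>t<n. E ! i = {vs ! t, vs ! ((t + 1) mod n)})})"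

definition cycs :: "'v set list \<Rightarrow> nat \<Rightarrow> nat \<Rightarrow> nat set set" where
  "cycs E j k = {C. is_cycle E C (2 * k) \<and> j \<in> C}"

definition valid_enum :: "'v set list \<Rightarrow> (nat \<Rightarrow> nat \<Rightarrow> nat \<Rightarrow> nat set) \<Rightarrow> bool" where
  "valid_enum E cyc \<longleftrightarrow> (\<forall>j<length E. \<forall>k\<ge>3.
      bij_betw (cyc j k) {1..card (cycs E j k)} (cycs E j k))"

definition cyc_index :: "'v set list \<Rightarrow> (nat \<Rightarrow> nat \<Rightarrow> nat \<Rightarrow> nat set) \<Rightarrow> nat \<Rightarrow> nat \<Rightarrow> nat set \<Rightarrow> nat" where
  "cyc_index E cyc j k C = (THE l. l \<in> {1..card (cycs E j k)} \<and> cyc j k l = C)"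

definition bicycles :: "'v set list \<Rightarrow> pcol \<Rightarrow> nat \<Rightarrow> nat set set" where
  "bicycles E col j = {C. \<exists>k\<ge>3. C \<in> cycs E j k \<and> (\<forall>i\<in>C. col i \<noteq> None) \<and> card (col ` C) \<le> 2}"

definition valid_rule :: "(pcol \<Rightarrow> nat \<Rightarrow> nat set set \<Rightarrow> nat set) \<Rightarrow> bool" where
  "valid_rule rule \<longleftrightarrow> (\<forall>col j B. B \<noteq> {} \<longrightarrow> rule col j B \<in> B)"

text \<open>ws lists the cycle C as consecutive edges e_{i_1},...,e_{i_2k} with i_1 = j and i_2 < i_2k.\<close>
definition cycle_walk :: "'v set list \<Rightarrow> nat set \<Rightarrow> nat \<Rightarrow> nat list \<Rightarrow> bool" where
  "cycle_walk E C j ws \<longleftrightarrow> length ws = card C \<and> distinct ws \<and> set ws = C \<and> ws ! 0 = j \<and>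
     (\<forall>t<length ws. E ! (ws ! t) \<inter> E ! (ws ! ((t + 1) mod length ws)) \<noteq> {}) \<and>
     ws ! 1 < ws ! (length ws - 1)"

text \<open>One step of the Procedure (given that some edge is uncolored), with input f = F_i.
  Returns the new partial colouring and the record R_i.\<close>
definition step :: "'v set list \<Rightarrow> real \<Rightarrow> (nat \<Rightarrow> nat \<Rightarrow> nat \<Rightarrow> nat set) \<Rightarrow>
    (pcol \<Rightarrow> nat \<Rightarrow> nat set set \<Rightarrow> nat set) \<Rightarrow> pcol \<Rightarrow> nat \<Rightarrow> pcol \<times> (nat \<times> nat) option" where
  "step E \<gamma> cyc rule col f =
    (let j = Min (uncolored E col);
         c = sorted_list_of_set (available E \<gamma> col j) ! (f - 1);
         col1 = col(j := Some c);
         B = bicycles E col1 j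
     in if B = {} then (col1, None)
        else (let C = rule col1 j B;
                  k = card C div 2;
                  ws = (THE ws. cycle_walk E C j ws)
              in ((\<lambda>i. if i \<in> C \<and> i \<noteq> ws ! 1 \<and> i \<noteq> ws ! 2 then None else col1 i),
                  Some (k, cyc_index E cyc j k C))))"

text \<open>run ... F i = Some (Phi_i, [R_1,...,R_i]) if step i is performed (None if the
  Procedure stopped earlier because all edges were colored).\<close>
fun run :: "'v set list \<Rightarrow> real \<Rightarrow> (nat \<Rightarrow> nat \<Rightarrow> nat \<Rightarrow> nat set) \<Rightarrow>
    (pcol \<Rightarrow> nat \<Rightarrow> nat set set \<Rightarrow> nat set) \<Rightarrow> nat list \<Rightarrow> nat \<Rightarrow> (pcol \<times> (nat \<times> nat) option list) option" where
  "run E \<gamma> cyc rule F 0 = Some (\<lambda>_. None, [])"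
| "run E \<gamma> cyc rule F (Suc i) =
    (case run E \<gamma> cyc rule F i of
       None \<Rightarrow> None
     | Some (col, Rs) \<Rightarrow>
         if uncolored E col = {} then None
         else (case step E \<gamma> cyc rule col (F ! i) of (col', r) \<Rightarrow> Some (col', Rs @ [r])))"

end

theory Submission
  imports Defs
begin

text \<open>The uncolored set after a step depends only on the uncolored set before it and on the
  record of the step: the edge coloured is e_j with j = min X, and if a bichromatic cycle C was
  uncoloured, then C is the l-th cycle of length 2k through e_j where R = (k, l), while the two
  edges kept coloured are determined by C and j alone. Induction over the steps then shows that
  the records determine every X_i.\<close>

lemma card_indices_in_distinct:
  assumes "distinct xs"
  shows "card {i. i < length xs \<and> xs ! i \<in> S} = card (S \<inter> set xs)"
proof -
  have "bij_betw (nth xs) {i. i < length xs \<and> xs ! i \<in> S} (S \<inter> set xs)"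
    using assms by (auto simp: bij_betw_def inj_on_def nth_eq_iff_index_eq in_set_conv_nth)
  then show ?thesis by (rule bij_betw_same_card)
qed

lemma inj_on_cycle_edges:
  assumes "n \<ge> 3" "length vs = n" "distinct vs"
  shows "inj_on (\<lambda>t. {vs ! t, vs ! ((t + 1) mod n)}) {..<n}"
proof (rule inj_onI)
  fix t s assume t: "t \<in> {..<n}" and s: "s \<in> {..<n}"
    and eq: "{vs ! t, vs ! ((t + 1) mod n)} = {vs ! s, vs ! ((s + 1) mod n)}"
  have succ: "(t + 1) mod n < n" "(s + 1) mod n < n" using assms(1) by auto
  show "t = s"
  proof (cases "vs ! t = vs ! s")
    case True
    then show ?thesis using assms t s by (simp add: nth_eq_iff_index_eq)
  next
    case False
    then have "vs ! t = vs ! ((s + 1) mod n) \<and> vs ! ((t + 1) mod n) = vs ! s"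
      using eq by (auto simp: doubleton_eq_iff)
    then have "t = (s + 1) mod n" "(t + 1) mod n = s"
      using assms t s succ by (auto simp: nth_eq_iff_index_eq)
    \<comment> \<open>Two vertices adjacent in both directions along a cycle force n = 2.\<close>
    moreover have "t + 1 < n \<or> t + 1 = n" "s + 1 < n \<or> s + 1 = n" using t s by auto
    ultimately show ?thesis using assms(1) by auto
  qed
qed

lemma card_cycle:
  assumes "distinct E" "is_cycle E C n"
  shows "card C = n"
proof -
  obtain vs where n: "n \<ge> 3" "length vs = n" "distinct vs"
    and edges: "\<forall>t<n. {vs ! t, vs ! ((t + 1) mod n)} \<in> set E"
    and C: "C = {i. i < length E \<and> (\<exists>t<n. E ! i = {vs ! t, vs ! ((t + 1) mod n)})}"
    using assms(2) unfolding is_cycle_def by blast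
  define P where "P = (\<lambda>t. {vs ! t, vs ! ((t + 1) mod n)}) ` {..<n}"
  have "C = {i. i < length E \<and> E ! i \<in> P}"
    unfolding C P_def by auto
  then have "card C = card (P \<inter> set E)"
    using card_indices_in_distinct[OF assms(1)] by simp
  also have "P \<inter> set E = P" using edges unfolding P_def by auto
  also have "card P = n"
    unfolding P_def using card_image[OF inj_on_cycle_edges[OF n]] by simp
  finally show ?thesis .
qed

lemma bicycle_in_cycs:
  assumes "distinct E" "C \<in> bicycles E col j"
  shows "card C div 2 \<ge> 3" "C \<in> cycs E j (card C div 2)"
proof -
  obtain k where "k \<ge> 3" "C \<in> cycs E j k"
    using assms(2) unfolding bicycles_def by auto
  moreover have "card C div 2 = k"
    using \<open>C \<in> cycs E j k\<close> card_cycle[OF assms(1)] unfolding cycs_def by auto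
  ultimately show "card C div 2 \<ge> 3" "C \<in> cycs E j (card C div 2)" by simp_all
qed

lemma cyc_cyc_index:
  assumes "valid_enum E cyc" "j < length E" "k \<ge> 3" "C \<in> cycs E j k"
  shows "cyc j k (cyc_index E cyc j k C) = C"
proof -
  have bij: "bij_betw (cyc j k) {1..card (cycs E j k)} (cycs E j k)"
    using assms(1-3) unfolding valid_enum_def by blast
  then obtain l where l: "l \<in> {1..card (cycs E j k)}" "cyc j k l = C"
    using assms(4) by (metis bij_betw_iff_bijections)
  have "cyc_index E cyc j k C = l"
    unfolding cyc_index_def
  proof (rule the_equality)
    fix l' assume "l' \<in> {1..card (cycs E j k)} \<and> cyc j k l' = C"
    then show "l' = l" using l bij unfolding bij_betw_def inj_on_def by metis
  qed (use l in simp)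
  then show ?thesis using l(2) by simp
qed

definition uncolored_successor :: "'v set list \<Rightarrow> (nat \<Rightarrow> nat \<Rightarrow> nat \<Rightarrow> nat set) \<Rightarrow> nat set
    \<Rightarrow> (nat \<times> nat) option \<Rightarrow> nat set" where
  "uncolored_successor E cyc X r = (case r of
       None \<Rightarrow> X - {Min X}
     | Some (k, l) \<Rightarrow>
         (let C = cyc (Min X) k l; ws = (THE ws. cycle_walk E C (Min X) ws)
          in (X - {Min X}) \<union> {i \<in> C. i \<noteq> ws ! 1 \<and> i \<noteq> ws ! 2}))"

lemma uncolored_step:
  assumes "simple_graph E" "valid_enum E cyc" "valid_rule rule"
    and "uncolored E col \<noteq> {}"
    and "step E \<gamma> cyc rule col f = (col2, r)"
  shows "uncolored E col2 = uncolored_successor E cyc (uncolored E col) r"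
proof -
  define X where "X = uncolored E col"
  define j where "j = Min X"
  have "finite X" unfolding X_def uncolored_def by auto
  then have "j \<in> X" using assms(4) unfolding j_def X_def by auto
  then have j: "j < length E" unfolding X_def uncolored_def by auto
  define col1 where "col1 = col(j := Some (sorted_list_of_set (available E \<gamma> col j) ! (f - 1)))"
  define B where "B = bicycles E col1 j"
  have uncolored_col1: "uncolored E col1 = X - {j}"
    unfolding col1_def X_def uncolored_def using \<open>j \<in> X\<close> by auto
  show ?thesis
  proof (cases "B = {}")
    case True
    then have "col2 = col1" "r = None"
      using assms(5) unfolding step_def Let_def j_def X_def col1_def B_def by simp_all
    then show ?thesis
      using uncolored_col1 unfolding uncolored_successor_def X_def j_def by simp
  next
    case False
    define C where "C = rule col1 j B"
    define k where "k = card C div 2"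
    define ws where "ws = (THE ws. cycle_walk E C j ws)"
    have col2: "col2 = (\<lambda>i. if i \<in> C \<and> i \<noteq> ws ! 1 \<and> i \<noteq> ws ! 2 then None else col1 i)"
      and r: "r = Some (k, cyc_index E cyc j k C)"
      using assms(5) False
      unfolding step_def Let_def j_def X_def col1_def B_def C_def k_def ws_def by simp_all
    have "C \<in> B" using assms(3) False unfolding valid_rule_def C_def by auto
    then have "k \<ge> 3" "C \<in> cycs E j k"
      using bicycle_in_cycs assms(1) unfolding B_def k_def simple_graph_def by auto
    then have C: "cyc j k (cyc_index E cyc j k C) = C"
      using cyc_cyc_index[OF assms(2) j] by blast
    have "C \<subseteq> {i. i < length E}"
      using \<open>C \<in> cycs E j k\<close> unfolding cycs_def is_cycle_def by auto
    then have "uncolored E col2 = (X - {j}) \<union> {i \<in> C. i \<noteq> ws ! 1 \<and> i \<noteq> ws ! 2}"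
      using uncolored_col1 unfolding col2 uncolored_def by auto
    then show ?thesis
      unfolding uncolored_successor_def r X_def[symmetric] j_def[symmetric] Let_def ws_def
      by (simp add: C)
  qed
qed

lemma uncolored_run_determined_by_records:
  assumes "simple_graph E" "valid_enum E cyc" "valid_rule rule"
  shows "run E \<gamma> cyc rule F i = Some (col, Rs) \<Longrightarrow> run E \<gamma> cyc rule F' i = Some (col', Rs)
     \<Longrightarrow> uncolored E col = uncolored E col'"
proof (induction i arbitrary: col col' Rs)
  case 0
  then show ?case by simp
next
  case (Suc i)
  obtain col0 Rs0 where run: "run E \<gamma> cyc rule F i = Some (col0, Rs0)"
    using Suc.prems(1) by (cases "run E \<gamma> cyc rule F i") auto
  obtain col0' Rs0' where run': "run E \<gamma> cyc rule F' i = Some (col0', Rs0')"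
    using Suc.prems(2) by (cases "run E \<gamma> cyc rule F' i") auto
  obtain r where step: "step E \<gamma> cyc rule col0 (F ! i) = (col, r)"
    and "uncolored E col0 \<noteq> {}" "Rs = Rs0 @ [r]"
    using Suc.prems(1) by (simp add: run split: if_splits prod.splits)
  obtain r' where step': "step E \<gamma> cyc rule col0' (F' ! i) = (col', r')"
    and "uncolored E col0' \<noteq> {}" "Rs = Rs0' @ [r']"
    using Suc.prems(2) by (simp add: run' split: if_splits prod.splits)
  have "Rs0 = Rs0'" "r = r'" using \<open>Rs = Rs0 @ [r]\<close> \<open>Rs = Rs0' @ [r']\<close> by auto
  then have "uncolored E col0 = uncolored E col0'" using Suc.IH run run' by simp
  then show ?case
    using uncolored_step[OF assms \<open>uncolored E col0 \<noteq> {}\<close> step]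
      uncolored_step[OF assms \<open>uncolored E col0' \<noteq> {}\<close> step'] \<open>r = r'\<close>
    by simp
qed

theorem lemma1:
  fixes E :: "'v set list" and \<gamma> :: real and t i :: nat
    and cyc :: "nat \<Rightarrow> nat \<Rightarrow> nat \<Rightarrow> nat set"
    and rule :: "pcol \<Rightarrow> nat \<Rightarrow> nat set set \<Rightarrow> nat set"
    and F F' :: "nat list" and col col' :: pcol and Rs Rs' :: "(nat \<times> nat) option list"
  assumes "simple_graph E"
    and "\<gamma> > 1" and "t > 0"
    and "valid_enum E cyc" and "valid_rule rule"
    and "length F = t" and "\<forall>x\<in>set F. x \<in> {1..Frange E \<gamma>}"
    and "length F' = t" and "\<forall>x\<in>set F'. x \<in> {1..Frange E \<gamma>}"
    and "1 \<le> i" and "i \<le> t"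
    and "run E \<gamma> cyc rule F i = Some (col, Rs)"
    and "run E \<gamma> cyc rule F' i = Some (col', Rs')"
    and "Rs = Rs'"
  shows "uncolored E col = uncolored E col'"
  using uncolored_run_determined_by_records[OF assms(1,4,5) assms(12)] assms(13,14) by blast

end
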